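(* Let $Q$ be a probability measure on $\mathcal Z$ and $P_1,P_2\ll Q$ probability measures with densities $\rho_j=\frac{\mathrm dP_j}{\mathrm dQ}$ such that, for some $\varepsilon\ge0$, $\delta\ge0$, $$\int\max\{\rho_1-e^{\varepsilon}\rho_2,0\}\,\mathrm dQ\le\delta\quad\text{and}\quad\int\max\{\rho_2-e^{\varepsilon}\rho_1,0\}\,\mathrm dQ\le\delta.$$ Then there exists a probability measure $P_3\ll Q$ such that $d_{\mathrm{TV}}(P_1,P_3)\le\delta$ and $e^{-\varepsilon}\frac{\mathrm dP_2}{\mathrm dQ}(z)\le\frac{\mathrm dP_3}{\mathrm dQ}(z)\le e^{\varepsilon}\frac{\mathrm dP_2}{\mathrm dQ}(z)$ for $Q$-almost every $z$.
   Context: $d_{\mathrm{TV}}(P,P')=\sup_S|P(S)-P'(S)|=\int\max\{\frac{\mathrm dP}{\mathrm dQ}-\frac{\mathrm dP'}{\mathrm dQ},0\}\,\mathrm dQ$. *)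

theory Defs
  imports "HOL-Probability.Probability"
begin

definition tv_dist :: "'a measure \<Rightarrow> 'a measure \<Rightarrow> real" where
  "tv_dist P P' = (SUP S \<in> sets P. \<bar>measure P S - measure P' S\<bar>)"

end

theory Submission
  imports Defs
begin

text \<open>
  Pass to real densities \<open>r\<^sub>1, r\<^sub>2\<close> of \<open>P\<^sub>1, P\<^sub>2\<close> and write \<open>E = e\<^sup>\<epsilon>\<close>.
  Clamping \<open>r\<^sub>1\<close> into the band \<open>[r\<^sub>2/E, E r\<^sub>2]\<close> gives a function \<open>c\<close> with
  \<open>1/E \<le> \<integral>c \<le> E\<close>. If \<open>\<integral>c \<le> 1\<close>, move \<open>c\<close> linearly towards the upper envelope
  \<open>E r\<^sub>2\<close> until the mass is \<open>1\<close>; the result \<open>g\<close> stays above \<open>min r\<^sub>1 (E r\<^sub>2)\<close>, so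
  \<open>\<integral>(r\<^sub>1 - g)\<^sup>+ \<le> \<integral>(r\<^sub>1 - E r\<^sub>2)\<^sup>+ \<le> \<delta>\<close>. Otherwise move towards the lower envelope
  and obtain \<open>\<integral>(g - r\<^sub>1)\<^sup>+ \<le> \<integral>(r\<^sub>2/E - r\<^sub>1)\<^sup>+ \<le> \<integral>(r\<^sub>2 - E r\<^sub>1)\<^sup>+ \<le> \<delta>\<close>.
  As \<open>g\<close> and \<open>r\<^sub>1\<close> both integrate to \<open>1\<close>, the two one-sided excesses coincide, and each
  bounds \<open>|P\<^sub>1(S) - P\<^sub>3(S)|\<close> for \<open>P\<^sub>3 = g\<cdot>Q\<close>.
\<close>

lemma integrable_interpolant:
  fixes f h :: "'a \<Rightarrow> real"
  assumes "integrable M f" and "integrable M h" and "\<And>z. f z \<le> h z"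
    and "integral\<^sup>L M f \<le> a" and "a \<le> integral\<^sup>L M h"
  shows "\<exists>g. integrable M g \<and> integral\<^sup>L M g = a \<and> (\<forall>z. f z \<le> g z \<and> g z \<le> h z)"
proof -
  define t where "t = (if integral\<^sup>L M h = integral\<^sup>L M f then 0
    else (a - integral\<^sup>L M f) / (integral\<^sup>L M h - integral\<^sup>L M f))"
  have t: "0 \<le> t" "t \<le> 1" and t_eq: "integral\<^sup>L M f + t * (integral\<^sup>L M h - integral\<^sup>L M f) = a"
    using assms(4,5) by (auto simp: t_def field_simps)
  define g where "g z = f z + t * (h z - f z)" for z
  have "integrable M g" unfolding g_def using assms(1,2) by auto
  moreover have "integral\<^sup>L M g = a"
    using assms(1,2) t_eq unfolding g_def by (simp add: algebra_simps)
  moreover have "f z \<le> g z \<and> g z \<le> h z" for z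
    using assms(3)[of z] t mult_left_le_one_le[of "h z - f z" t] by (auto simp: g_def)
  ultimately show ?thesis by blast
qed

lemma integral_pos_part_diff_swap:
  fixes f g :: "'a \<Rightarrow> real"
  assumes "integrable M f" and "integrable M g" and "integral\<^sup>L M f = integral\<^sup>L M g"
  shows "(\<integral>z. max (f z - g z) 0 \<partial>M) = (\<integral>z. max (g z - f z) 0 \<partial>M)"
proof -
  have "(\<integral>z. max (f z - g z) 0 \<partial>M) - (\<integral>z. max (g z - f z) 0 \<partial>M)
      = (\<integral>z. max (f z - g z) 0 - max (g z - f z) 0 \<partial>M)"
    using assms(1,2) by (intro Bochner_Integration.integral_diff[symmetric]) auto
  also have "\<dots> = (\<integral>z. f z - g z \<partial>M)"
    by (intro Bochner_Integration.integral_cong) auto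
  also have "\<dots> = 0"
    using assms by simp
  finally show ?thesis by simp
qed

lemma exists_integrable_between_envelopes:
  fixes l u r :: "'a \<Rightarrow> real"
  assumes l: "integrable M l" and u: "integrable M u" and r: "integrable M r"
    and l_le_u: "\<And>z. l z \<le> u z"
    and "integral\<^sup>L M l \<le> a" and "a \<le> integral\<^sup>L M u" and r_int: "integral\<^sup>L M r = a"
    and above: "(\<integral>z. max (r z - u z) 0 \<partial>M) \<le> \<delta>"
    and below: "(\<integral>z. max (l z - r z) 0 \<partial>M) \<le> \<delta>"
  shows "\<exists>g. integrable M g \<and> integral\<^sup>L M g = a \<and> (\<forall>z. l z \<le> g z \<and> g z \<le> u z) \<and>
    (\<integral>z. max (r z - g z) 0 \<partial>M) \<le> \<delta> \<and> (\<integral>z. max (g z - r z) 0 \<partial>M) \<le> \<delta>"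
proof -
  define c where "c z = max (l z) (min (r z) (u z))" for z
  have c: "integrable M c"
    unfolding c_def using l u r by auto
  have c_bounds: "l z \<le> c z" "c z \<le> u z" for z
    using l_le_u[of z] by (auto simp: c_def)
  have "\<exists>g. integrable M g \<and> integral\<^sup>L M g = a \<and> (\<forall>z. l z \<le> g z \<and> g z \<le> u z) \<and>
    ((\<integral>z. max (r z - g z) 0 \<partial>M) \<le> \<delta> \<or> (\<integral>z. max (g z - r z) 0 \<partial>M) \<le> \<delta>)"
  proof (cases "integral\<^sup>L M c \<le> a")
    case True
    obtain g where g: "integrable M g" "integral\<^sup>L M g = a" "\<And>z. c z \<le> g z \<and> g z \<le> u z"
      using integrable_interpolant[OF c u c_bounds(2) True assms(6)] by blast
    have "max (r z - g z) 0 \<le> max (r z - u z) 0" for z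
    proof -
      have "min (r z) (u z) \<le> g z"
        using g(3)[of z] max.cobounded2[of "min (r z) (u z)" "l z"] unfolding c_def by linarith
      then show ?thesis
        by (simp add: min_def max_def split: if_splits)
    qed
    then have "(\<integral>z. max (r z - g z) 0 \<partial>M) \<le> (\<integral>z. max (r z - u z) 0 \<partial>M)"
      using g(1) r u by (intro integral_mono) auto
    moreover have "l z \<le> g z \<and> g z \<le> u z" for z
      using g(3)[of z] c_bounds[of z] by linarith
    ultimately show ?thesis
      using g(1,2) above by (intro exI[of _ g]) auto
  next
    case False
    then have "a \<le> integral\<^sup>L M c"
      by linarith
    then obtain g where g: "integrable M g" "integral\<^sup>L M g = a" "\<And>z. l z \<le> g z \<and> g z \<le> c z"
      using integrable_interpolant[OF l c c_bounds(1) assms(5)] by blast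
    have "max (g z - r z) 0 \<le> max (l z - r z) 0" for z
    proof -
      have "c z \<le> max (l z) (r z)"
        unfolding c_def by (intro max.mono) simp_all
      then have "g z \<le> max (l z) (r z)"
        using g(3)[of z] by linarith
      then show ?thesis
        by (simp add: max_def split: if_splits)
    qed
    then have "(\<integral>z. max (g z - r z) 0 \<partial>M) \<le> (\<integral>z. max (l z - r z) 0 \<partial>M)"
      using g(1) r l by (intro integral_mono) auto
    moreover have "l z \<le> g z \<and> g z \<le> u z" for z
      using g(3)[of z] c_bounds[of z] by linarith
    ultimately show ?thesis
      using g(1,2) below by (intro exI[of _ g]) auto
  qed
  then obtain g where g: "integrable M g" "integral\<^sup>L M g = a" "\<forall>z. l z \<le> g z \<and> g z \<le> u z"
    and "(\<integral>z. max (r z - g z) 0 \<partial>M) \<le> \<delta> \<or> (\<integral>z. max (g z - r z) 0 \<partial>M) \<le> \<delta>"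
    by blast
  moreover have "(\<integral>z. max (r z - g z) 0 \<partial>M) = (\<integral>z. max (g z - r z) 0 \<partial>M)"
    using r g(1,2) r_int by (intro integral_pos_part_diff_swap) auto
  ultimately show ?thesis by auto
qed

lemma exists_integrable_in_ratio_band:
  fixes r1 r2 :: "'a \<Rightarrow> real" and E :: real
  assumes "1 \<le> E" and r1: "integrable M r1" "integral\<^sup>L M r1 = 1"
    and r2: "integrable M r2" "integral\<^sup>L M r2 = 1" and r2_nonneg: "\<And>z. 0 \<le> r2 z"
    and above: "(\<integral>z. max (r1 z - E * r2 z) 0 \<partial>M) \<le> \<delta>"
    and below: "(\<integral>z. max (r2 z - E * r1 z) 0 \<partial>M) \<le> \<delta>"
  shows "\<exists>g. integrable M g \<and> integral\<^sup>L M g = 1 \<and>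
    (\<forall>z. inverse E * r2 z \<le> g z \<and> g z \<le> E * r2 z) \<and>
    (\<integral>z. max (r1 z - g z) 0 \<partial>M) \<le> \<delta> \<and> (\<integral>z. max (g z - r1 z) 0 \<partial>M) \<le> \<delta>"
proof (rule exists_integrable_between_envelopes[OF _ _ r1(1) _ _ _ r1(2) above])
  have inv_E: "0 \<le> inverse E" "inverse E \<le> 1"
    using \<open>1 \<le> E\<close> by (auto simp: inverse_le_1_iff)
  have "max (inverse E * r2 z - r1 z) 0 \<le> max (r2 z - E * r1 z) 0" for z
  proof -
    have "inverse E * x \<le> max x 0" for x :: real
      using inv_E by (cases "0 \<le> x") (auto intro: mult_left_le_one_le mult_nonneg_nonpos order_trans)
    moreover have "inverse E * r2 z - r1 z = inverse E * (r2 z - E * r1 z)"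
      using \<open>1 \<le> E\<close> by (simp add: field_simps)
    ultimately have "inverse E * r2 z - r1 z \<le> max (r2 z - E * r1 z) 0"
      by (simp only:)
    then show ?thesis
      by simp
  qed
  then have "(\<integral>z. max (inverse E * r2 z - r1 z) 0 \<partial>M) \<le> (\<integral>z. max (r2 z - E * r1 z) 0 \<partial>M)"
    using r1 r2 by (intro integral_mono) auto
  with below show "(\<integral>z. max (inverse E * r2 z - r1 z) 0 \<partial>M) \<le> \<delta>"
    by linarith
  show "inverse E * r2 z \<le> E * r2 z" for z
    using \<open>1 \<le> E\<close> inv_E r2_nonneg[of z] by (intro mult_right_mono) auto
  show "integrable M (\<lambda>z. inverse E * r2 z)" "integrable M (\<lambda>z. E * r2 z)"
    using r2(1) by auto
  show "(\<integral>z. inverse E * r2 z \<partial>M) \<le> 1" "1 \<le> (\<integral>z. E * r2 z \<partial>M)"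
    using r2(2) inv_E \<open>1 \<le> E\<close> by simp_all
qed

lemma prob_space_density_real_iff:
  fixes f :: "'a \<Rightarrow> real"
  assumes [measurable]: "f \<in> borel_measurable M" and f_nonneg: "\<And>z. 0 \<le> f z"
  shows "prob_space (density M (\<lambda>z. ennreal (f z))) \<longleftrightarrow> integrable M f \<and> integral\<^sup>L M f = 1"
proof -
  have "emeasure (density M (\<lambda>z. ennreal (f z))) (space M) = (\<integral>\<^sup>+z. ennreal (f z) \<partial>M)"
    by (subst emeasure_density) (auto intro!: nn_integral_cong)
  then have "prob_space (density M (\<lambda>z. ennreal (f z))) \<longleftrightarrow> (\<integral>\<^sup>+z. ennreal (f z) \<partial>M) = ennreal 1"
    by (auto intro: prob_spaceI dest: prob_space.emeasure_space_1)
  also have "\<dots> \<longleftrightarrow> integrable M f \<and> integral\<^sup>L M f = 1"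
    using f_nonneg by (intro nn_integral_eq_integrable) auto
  finally show ?thesis .
qed

lemma nn_integral_ennreal_minus:
  fixes f g :: "'a \<Rightarrow> real"
  assumes "integrable M f" and "integrable M g" and g_nonneg: "\<And>z. 0 \<le> g z"
  shows "(\<integral>\<^sup>+z. ennreal (f z) - ennreal (g z) \<partial>M) = ennreal (\<integral>z. max (f z - g z) 0 \<partial>M)"
proof -
  have "(\<integral>\<^sup>+z. ennreal (f z) - ennreal (g z) \<partial>M) = (\<integral>\<^sup>+z. ennreal (max (f z - g z) 0) \<partial>M)"
    using g_nonneg by (intro nn_integral_cong) (simp add: ennreal_minus ennreal_max_0)
  also have "\<dots> = ennreal (\<integral>z. max (f z - g z) 0 \<partial>M)"
    using assms(1,2) by (intro nn_integral_eq_integral) auto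
  finally show ?thesis .
qed

definition real_RN_deriv :: "'a measure \<Rightarrow> 'a measure \<Rightarrow> 'a \<Rightarrow> real" where
  "real_RN_deriv M N z = enn2real (RN_deriv M N z)"

lemma real_RN_deriv_nonneg: "0 \<le> real_RN_deriv M N z"
  by (simp add: real_RN_deriv_def)

lemma borel_measurable_real_RN_deriv[measurable]: "real_RN_deriv M N \<in> borel_measurable M"
  unfolding real_RN_deriv_def by measurable

context sigma_finite_measure
begin

lemma AE_RN_deriv_eq_real_RN_deriv:
  assumes "sigma_finite_measure N" and "absolutely_continuous M N" and "sets N = sets M"
  shows "AE z in M. RN_deriv M N z = ennreal (real_RN_deriv M N z)"
  using RN_deriv_finite[OF assms]
  by eventually_elim (simp add: real_RN_deriv_def ennreal_enn2real_if)

lemma density_real_RN_deriv: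
  assumes "sigma_finite_measure N" and "absolutely_continuous M N" and "sets N = sets M"
  shows "density M (\<lambda>z. ennreal (real_RN_deriv M N z)) = N"
  using density_RN_deriv[OF assms(2,3)] density_cong[OF _ _ AE_RN_deriv_eq_real_RN_deriv[OF assms]]
  by simp

lemma integrable_real_RN_deriv:
  assumes "prob_space N" and "absolutely_continuous M N" and "sets N = sets M"
  shows "integrable M (real_RN_deriv M N)" and "integral\<^sup>L M (real_RN_deriv M N) = 1"
proof -
  have "sigma_finite_measure N"
    using assms(1) by (simp add: prob_space_imp_sigma_finite)
  then have "prob_space (density M (\<lambda>z. ennreal (real_RN_deriv M N z)))"
    using assms by (simp add: density_real_RN_deriv)
  then show "integrable M (real_RN_deriv M N)" and "integral\<^sup>L M (real_RN_deriv M N) = 1"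
    by (simp_all add: prob_space_density_real_iff real_RN_deriv_nonneg)
qed

lemma nn_integral_RN_deriv_excess:
  assumes "prob_space N" and "absolutely_continuous M N" and "sets N = sets M"
    and "prob_space N'" and "absolutely_continuous M N'" and "sets N' = sets M"
    and "0 \<le> c"
  shows "(\<integral>\<^sup>+z. RN_deriv M N z - ennreal c * RN_deriv M N' z \<partial>M)
    = ennreal (\<integral>z. max (real_RN_deriv M N z - c * real_RN_deriv M N' z) 0 \<partial>M)"
proof -
  have "AE z in M. RN_deriv M N z - ennreal c * RN_deriv M N' z
      = ennreal (real_RN_deriv M N z) - ennreal (c * real_RN_deriv M N' z)"
    using AE_RN_deriv_eq_real_RN_deriv[OF prob_space_imp_sigma_finite[OF assms(1)] assms(2,3)]
      AE_RN_deriv_eq_real_RN_deriv[OF prob_space_imp_sigma_finite[OF assms(4)] assms(5,6)]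
    by eventually_elim (simp add: ennreal_mult assms(7) real_RN_deriv_nonneg)
  then have "(\<integral>\<^sup>+z. RN_deriv M N z - ennreal c * RN_deriv M N' z \<partial>M)
      = (\<integral>\<^sup>+z. ennreal (real_RN_deriv M N z) - ennreal (c * real_RN_deriv M N' z) \<partial>M)"
    by (rule nn_integral_cong_AE)
  also have "\<dots> = ennreal (\<integral>z. max (real_RN_deriv M N z - c * real_RN_deriv M N' z) 0 \<partial>M)"
    using integrable_real_RN_deriv(1)[OF assms(1-3)] integrable_real_RN_deriv(1)[OF assms(4-6)]
    by (intro nn_integral_ennreal_minus) (auto simp: assms(7) real_RN_deriv_nonneg)
  finally show ?thesis .
qed

lemma AE_RN_deriv_density_between:
  assumes "sigma_finite_measure N" and "absolutely_continuous M N" and "sets N = sets M"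
    and [measurable]: "g \<in> borel_measurable M" and "0 \<le> c" and "0 \<le> d"
    and g_bounds: "\<And>z. c * real_RN_deriv M N z \<le> g z \<and> g z \<le> d * real_RN_deriv M N z"
  shows "AE z in M. ennreal c * RN_deriv M N z \<le> RN_deriv M (density M (\<lambda>z. ennreal (g z))) z \<and>
    RN_deriv M (density M (\<lambda>z. ennreal (g z))) z \<le> ennreal d * RN_deriv M N z"
proof -
  have "AE z in M. ennreal (g z) = RN_deriv M (density M (\<lambda>z. ennreal (g z))) z"
    by (rule RN_deriv_unique) auto
  with AE_RN_deriv_eq_real_RN_deriv[OF assms(1-3)] show ?thesis
  proof eventually_elim
    case (elim z)
    have "ennreal (c * real_RN_deriv M N z) \<le> ennreal (g z)"
      "ennreal (g z) \<le> ennreal (d * real_RN_deriv M N z)"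
      using g_bounds[of z] by (auto intro: ennreal_leI)
    with elim show ?case
      by (simp add: ennreal_mult assms(5,6) real_RN_deriv_nonneg)
  qed
qed

end

lemma emeasure_density_le_add_excess:
  fixes f h :: "'a \<Rightarrow> real"
  assumes "integrable M f" and "integrable M h" and h_nonneg: "\<And>z. 0 \<le> h z"
    and [measurable]: "S \<in> sets M"
  shows "emeasure (density M (\<lambda>z. ennreal (f z))) S
    \<le> emeasure (density M (\<lambda>z. ennreal (h z))) S + ennreal (\<integral>z. max (f z - h z) 0 \<partial>M)"
proof -
  have [measurable]: "f \<in> borel_measurable M" "h \<in> borel_measurable M"
    using assms(1,2) by auto
  have "emeasure (density M (\<lambda>z. ennreal (f z))) S = (\<integral>\<^sup>+z. ennreal (f z) * indicator S z \<partial>M)"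
    by (simp add: emeasure_density)
  also have "\<dots> \<le> (\<integral>\<^sup>+z. ennreal (h z) * indicator S z + ennreal (max (f z - h z) 0) \<partial>M)"
  proof (intro nn_integral_mono)
    fix z
    have "ennreal (f z) \<le> ennreal (h z + max (f z - h z) 0)"
      by (intro ennreal_leI) simp
    also have "\<dots> = ennreal (h z) + ennreal (max (f z - h z) 0)"
      using h_nonneg[of z] by (simp add: ennreal_plus)
    finally
    show "ennreal (f z) * indicator S z \<le> ennreal (h z) * indicator S z + ennreal (max (f z - h z) 0)"
      by (cases "z \<in> S") auto
  qed
  also have "\<dots> = (\<integral>\<^sup>+z. ennreal (h z) * indicator S z \<partial>M) + (\<integral>\<^sup>+z. ennreal (max (f z - h z) 0) \<partial>M)"
    by (intro nn_integral_add) auto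
  also have "(\<integral>\<^sup>+z. ennreal (max (f z - h z) 0) \<partial>M) = ennreal (\<integral>z. max (f z - h z) 0 \<partial>M)"
    using assms(1,2) by (intro nn_integral_eq_integral) auto
  finally show ?thesis
    by (simp add: emeasure_density)
qed

lemma tv_dist_density_le:
  fixes f h :: "'a \<Rightarrow> real"
  assumes f: "integrable M f" "integral\<^sup>L M f = 1" "\<And>z. 0 \<le> f z"
    and h: "integrable M h" "integral\<^sup>L M h = 1" "\<And>z. 0 \<le> h z"
    and "(\<integral>z. max (f z - h z) 0 \<partial>M) \<le> \<delta>" and "(\<integral>z. max (h z - f z) 0 \<partial>M) \<le> \<delta>"
  shows "tv_dist (density M (\<lambda>z. ennreal (f z))) (density M (\<lambda>z. ennreal (h z))) \<le> \<delta>"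
  unfolding tv_dist_def
proof (rule cSUP_least)
  interpret F: prob_space "density M (\<lambda>z. ennreal (f z))"
    using f by (subst prob_space_density_real_iff) auto
  interpret H: prob_space "density M (\<lambda>z. ennreal (h z))"
    using h by (subst prob_space_density_real_iff) auto
  have "0 \<le> (\<integral>z. max (f z - h z) 0 \<partial>M)"
    by (intro Bochner_Integration.integral_nonneg) auto
  then have "0 \<le> \<delta>"
    using assms(7) by linarith
  fix S assume "S \<in> sets (density M (\<lambda>z. ennreal (f z)))"
  then have S: "S \<in> sets M" by simp
  have "emeasure (density M (\<lambda>z. ennreal (f z))) S \<le> emeasure (density M (\<lambda>z. ennreal (h z))) S + ennreal \<delta>"
    using emeasure_density_le_add_excess[OF f(1) h(1) h(3) S] assms(7)
    by (meson add_left_mono ennreal_leI order_trans)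
  moreover have "emeasure (density M (\<lambda>z. ennreal (h z))) S \<le> emeasure (density M (\<lambda>z. ennreal (f z))) S + ennreal \<delta>"
    using emeasure_density_le_add_excess[OF h(1) f(1) f(3) S] assms(8)
    by (meson add_left_mono ennreal_leI order_trans)
  ultimately show "\<bar>measure (density M (\<lambda>z. ennreal (f z))) S - measure (density M (\<lambda>z. ennreal (h z))) S\<bar> \<le> \<delta>"
    using \<open>0 \<le> \<delta>\<close>
    by (simp add: F.emeasure_eq_measure H.emeasure_eq_measure ennreal_plus[symmetric] del: ennreal_plus)
qed (use sets.empty_sets in blast)

theorem mainTheorem13:
  fixes Q P1 P2 :: "'a measure" and \<epsilon> \<delta> :: real
  assumes "prob_space Q" and "prob_space P1" and "prob_space P2"
    and "sets P1 = sets Q" and "sets P2 = sets Q"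
    and "absolutely_continuous Q P1" and "absolutely_continuous Q P2"
    and "\<epsilon> \<ge> 0" and "\<delta> \<ge> 0"
    and "(\<integral>\<^sup>+ z. (RN_deriv Q P1 z - ennreal (exp \<epsilon>) * RN_deriv Q P2 z) \<partial>Q) \<le> ennreal \<delta>"
    and "(\<integral>\<^sup>+ z. (RN_deriv Q P2 z - ennreal (exp \<epsilon>) * RN_deriv Q P1 z) \<partial>Q) \<le> ennreal \<delta>"
  shows "\<exists>P3 :: 'a measure. prob_space P3 \<and> sets P3 = sets Q \<and> absolutely_continuous Q P3 \<and>
           tv_dist P1 P3 \<le> \<delta> \<and>
           (AE z in Q. ennreal (exp (-\<epsilon>)) * RN_deriv Q P2 z \<le> RN_deriv Q P3 z \<and>
                       RN_deriv Q P3 z \<le> ennreal (exp \<epsilon>) * RN_deriv Q P2 z)"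
proof -
  interpret Q: prob_space Q by fact
  define r1 where "r1 = real_RN_deriv Q P1"
  define r2 where "r2 = real_RN_deriv Q P2"
  have r1: "integrable Q r1" "integral\<^sup>L Q r1 = 1" and r2: "integrable Q r2" "integral\<^sup>L Q r2 = 1"
    using Q.integrable_real_RN_deriv assms(2-7) unfolding r1_def r2_def by blast+
  have excess: "(\<integral>z. max (r1 z - exp \<epsilon> * r2 z) 0 \<partial>Q) \<le> \<delta>"
      "(\<integral>z. max (r2 z - exp \<epsilon> * r1 z) 0 \<partial>Q) \<le> \<delta>"
    using assms(9-11) Q.nn_integral_RN_deriv_excess[OF assms(2,6,4,3,7,5)]
      Q.nn_integral_RN_deriv_excess[OF assms(3,7,5,2,6,4)] by (simp_all add: r1_def r2_def)
  obtain g where g: "integrable Q g" "integral\<^sup>L Q g = 1"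
      "\<And>z. inverse (exp \<epsilon>) * r2 z \<le> g z \<and> g z \<le> exp \<epsilon> * r2 z"
    and tv_bounds: "(\<integral>z. max (r1 z - g z) 0 \<partial>Q) \<le> \<delta>" "(\<integral>z. max (g z - r1 z) 0 \<partial>Q) \<le> \<delta>"
    using exists_integrable_in_ratio_band[OF _ r1 r2 real_RN_deriv_nonneg[of Q P2, folded r2_def] excess]
      assms(8) by (meson one_le_exp_iff)
  have g_nonneg: "0 \<le> g z" for z
    using g(3)[of z] real_RN_deriv_nonneg[of Q P2 z] unfolding r2_def
    by (meson order_trans positive_imp_inverse_positive exp_gt_zero less_imp_le mult_nonneg_nonneg)
  have [measurable]: "g \<in> borel_measurable Q"
    using g(1) by auto
  have P1: "P1 = density Q (\<lambda>z. ennreal (r1 z))"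
    using Q.density_real_RN_deriv[OF prob_space_imp_sigma_finite[OF assms(2)] assms(6,4)] by (simp add: r1_def)
  show ?thesis
  proof (intro exI[of _ "density Q (\<lambda>z. ennreal (g z))"] conjI)
    show "prob_space (density Q (\<lambda>z. ennreal (g z)))"
      using g g_nonneg by (simp add: prob_space_density_real_iff)
    show "absolutely_continuous Q (density Q (\<lambda>z. ennreal (g z)))"
      by (rule absolutely_continuousI_density) simp
    show "tv_dist P1 (density Q (\<lambda>z. ennreal (g z))) \<le> \<delta>"
      unfolding P1 using r1 real_RN_deriv_nonneg g(1,2) g_nonneg tv_bounds
      by (intro tv_dist_density_le) (auto simp: r1_def)
    show "AE z in Q. ennreal (exp (-\<epsilon>)) * RN_deriv Q P2 z \<le> RN_deriv Q (density Q (\<lambda>z. ennreal (g z))) z \<and>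
        RN_deriv Q (density Q (\<lambda>z. ennreal (g z))) z \<le> ennreal (exp \<epsilon>) * RN_deriv Q P2 z"
      using Q.AE_RN_deriv_density_between[OF prob_space_imp_sigma_finite[OF assms(3)] assms(7,5),
          of g "inverse (exp \<epsilon>)" "exp \<epsilon>"] g(3)
      by (simp add: exp_minus r2_def)
  qed simp
qed

end
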